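(* Let $m_1,m_2\ge1$, let $k_1,k_2\ge0$ be integers and $r_1,r_2>0$ with $r_1^2+r_2^2=1$. Let $F_1:\mathbb{R}^{m_1+1}\to\mathbb{R}^{n_1+1}$ and $F_2:\mathbb{R}^{m_2+1}\to\mathbb{R}^{n_2+1}$ be harmonic forms of degrees $k_1$, $k_2$ (each component a harmonic homogeneous polynomial of that degree) with $|F_1(\bar x)|^2=r_1^2|\bar x|^{2k_1}$ on $\mathbb{R}^{m_1+1}$ and $|F_2(\bar y)|^2=r_2^2|\bar y|^{2k_2}$ on $\mathbb{R}^{m_2+1}$, restricting to $\varphi_1:\mathbb{S}^{m_1}\to\mathbb{S}^{n_1}(r_1)$ and $\varphi_2:\mathbb{S}^{m_2}\to\mathbb{S}^{n_2}(r_2)$. Let $\varphi=\iota\circ(\varphi_1,\varphi_2):\mathbb{S}^{m_1}\times\mathbb{S}^{m_2}\to\mathbb{S}^{n_1+n_2+1}$, $\varphi(x,y)=(\varphi_1(x),\varphi_2(y))$, where $\mathbb{S}^{m_1}\times\mathbb{S}^{m_2}$ carries the product metric and $\iota$ is the canonical inclusion of $\mathbb{S}^{n_1}(r_1)\times\mathbb{S}^{n_2}(r_2)$ into $\mathbb{S}^{n_1+n_2+1}$. Then $\varphi$ is proper biharmonic if and only if $r_1=r_2=1/\sqrt2$ and $e(\varphi_1)\neq e(\varphi_2)$.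
   Context: $\mathbb{S}^m$ is the unit sphere in $\mathbb{R}^{m+1}$, $\mathbb{S}^n(r)$ the sphere of radius $r$ centred at $0$. Energy density $e(\psi)=\frac12|d\psi|^2$ (here constant). Proper biharmonic means vanishing bitension field $\tau_2(\varphi)=-\Delta\tau(\varphi)-\operatorname{trace}R^N(d\varphi\cdot,\tau(\varphi))d\varphi\cdot$ (with $\Delta=-\operatorname{trace}\nabla^2$) but nonvanishing tension field $\tau(\varphi)=\operatorname{trace}\nabla d\varphi$. *)

theory Defs
  imports "HOL-Analysis.Analysis"
begin

section \<open>Harmonic forms on R^(m+1) (index type 'm with CARD('m) = m+1)\<close>

definition hom_poly :: "nat \<Rightarrow> (real^'m \<Rightarrow> real) \<Rightarrow> bool" where
  "hom_poly k f \<longleftrightarrow> (\<exists>c :: ('m \<Rightarrow> nat) \<Rightarrow> real.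
     \<forall>x. f x = (\<Sum>\<alpha>\<in>{\<alpha>. sum \<alpha> UNIV = k}. c \<alpha> * (\<Prod>i\<in>UNIV. (x $ i) ^ (\<alpha> i))))"

definition eucl_laplacian :: "(real^'m \<Rightarrow> real) \<Rightarrow> real^'m \<Rightarrow> real" where
  "eucl_laplacian f x = (\<Sum>i\<in>UNIV. deriv (deriv (\<lambda>t. f (x + t *\<^sub>R axis i 1))) 0)"

definition harmonic_form :: "nat \<Rightarrow> (real^'m \<Rightarrow> real^'n) \<Rightarrow> bool" where
  "harmonic_form k F \<longleftrightarrow> (\<forall>j. hom_poly k (\<lambda>x. F x $ j) \<and>
                                (\<forall>x. eucl_laplacian (\<lambda>x. F x $ j) x = 0))"

text \<open>Geodesic of the unit sphere through x with initial velocity u (u tangent).\<close>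
definition sgeo :: "'a::real_normed_vector \<Rightarrow> 'a \<Rightarrow> real \<Rightarrow> 'a" where
  "sgeo x u t = cos (t * norm u) *\<^sub>R x + (sin (t * norm u) / norm u) *\<^sub>R u"

definition sproj :: "'a::real_inner \<Rightarrow> 'a \<Rightarrow> 'a" where
  "sproj x u = u - (u \<bullet> x) *\<^sub>R x"

text \<open>Product metric on S^m1 x S^m2: geodesics and tangent projection.\<close>
definition pgeo :: "('a::real_normed_vector \<times> 'b::real_normed_vector) \<Rightarrow> ('a \<times> 'b) \<Rightarrow> real \<Rightarrow> 'a \<times> 'b" where
  "pgeo p w t = (sgeo (fst p) (fst w) t, sgeo (snd p) (snd w) t)"

definition pproj :: "('a::real_inner \<times> 'b::real_inner) \<Rightarrow> ('a \<times> 'b) \<Rightarrow> 'a \<times> 'b" where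
  "pproj p w = (sproj (fst p) (fst w), sproj (snd p) (snd w))"

definition dmap :: "('a \<Rightarrow> 'a \<Rightarrow> real \<Rightarrow> 'a) \<Rightarrow> ('a \<Rightarrow> 'c::real_normed_vector) \<Rightarrow> 'a \<Rightarrow> 'a \<Rightarrow> 'c" where
  "dmap geo f p w = vector_derivative (\<lambda>t. f (geo p w t)) (at 0)"

text \<open>(\<nabla> d f)(w,w) = second derivative along the geodesic with velocity w.\<close>
definition ddmap :: "('a \<Rightarrow> 'a \<Rightarrow> real \<Rightarrow> 'a) \<Rightarrow> ('a \<Rightarrow> 'c::real_normed_vector) \<Rightarrow> 'a \<Rightarrow> 'a \<Rightarrow> 'c" where
  "ddmap geo f p w =
     vector_derivative (\<lambda>t. vector_derivative (\<lambda>s. f (geo p w s)) (at t)) (at 0)"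

text \<open>Energy density e(f) = |df|^2/2; the trace over T_pM is computed as the sum over the
  ambient orthonormal basis of the tangential projections (= trace over an orthonormal
  basis of T_pM).\<close>
definition energy_density ::
  "('a::euclidean_space \<Rightarrow> 'a \<Rightarrow> real \<Rightarrow> 'a) \<Rightarrow> ('a \<Rightarrow> 'a \<Rightarrow> 'a) \<Rightarrow> ('a \<Rightarrow> 'c::real_normed_vector) \<Rightarrow> 'a \<Rightarrow> real" where
  "energy_density geo proj f p = (\<Sum>b\<in>Basis. (norm (dmap geo f p (proj p b)))\<^sup>2) / 2"

definition ttan :: "'c::real_inner \<Rightarrow> 'c \<Rightarrow> 'c" where
  "ttan q v = v - (v \<bullet> q) *\<^sub>R q"

definition tension ::
  "('a::euclidean_space \<Rightarrow> 'a \<Rightarrow> real \<Rightarrow> 'a) \<Rightarrow> ('a \<Rightarrow> 'a \<Rightarrow> 'a) \<Rightarrow> ('a \<Rightarrow> 'c::real_inner) \<Rightarrow> 'a \<Rightarrow> 'c" where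
  "tension geo proj f p = ttan (f p) (\<Sum>b\<in>Basis. ddmap geo f p (proj p b))"

text \<open>Second covariant derivative (\<nabla>^2 V)(w,w) of a section V of f^{-1}TS, computed along the
  geodesic with velocity w (pull-back connection = tangential part of the derivative).\<close>
definition cov2 ::
  "('a \<Rightarrow> 'a \<Rightarrow> real \<Rightarrow> 'a) \<Rightarrow> ('a \<Rightarrow> 'c::real_inner) \<Rightarrow> ('a \<Rightarrow> 'c) \<Rightarrow> 'a \<Rightarrow> 'a \<Rightarrow> 'c" where
  "cov2 geo f V p w = ttan (f p) (vector_derivative
      (\<lambda>t. ttan (f (geo p w t)) (vector_derivative (\<lambda>s. V (geo p w s)) (at t))) (at 0))"

definition rough_laplacian ::
  "('a::euclidean_space \<Rightarrow> 'a \<Rightarrow> real \<Rightarrow> 'a) \<Rightarrow> ('a \<Rightarrow> 'a \<Rightarrow> 'a) \<Rightarrow> ('a \<Rightarrow> 'c::real_inner) \<Rightarrow> ('a \<Rightarrow> 'c) \<Rightarrow> 'a \<Rightarrow> 'c" where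
  "rough_laplacian geo proj f V p = - (\<Sum>b\<in>Basis. cov2 geo f V p (proj p b))"

text \<open>Curvature tensor of the unit sphere, R(X,Y)Z = <Y,Z>X - <X,Z>Y
  (convention R(X,Y) = [\<nabla>_X,\<nabla>_Y] - \<nabla>_[X,Y]).\<close>
definition sphere_curv :: "'c::real_inner \<Rightarrow> 'c \<Rightarrow> 'c \<Rightarrow> 'c" where
  "sphere_curv X Y Z = (Y \<bullet> Z) *\<^sub>R X - (X \<bullet> Z) *\<^sub>R Y"

definition bitension ::
  "('a::euclidean_space \<Rightarrow> 'a \<Rightarrow> real \<Rightarrow> 'a) \<Rightarrow> ('a \<Rightarrow> 'a \<Rightarrow> 'a) \<Rightarrow> ('a \<Rightarrow> 'c::real_inner) \<Rightarrow> 'a \<Rightarrow> 'c" where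
  "bitension geo proj f p =
     - rough_laplacian geo proj f (tension geo proj f) p
     - (\<Sum>b\<in>Basis. sphere_curv (dmap geo f p (proj p b)) (tension geo proj f p)
                                 (dmap geo f p (proj p b)))"

definition proper_biharmonic ::
  "('a::euclidean_space \<Rightarrow> 'a \<Rightarrow> real \<Rightarrow> 'a) \<Rightarrow> ('a \<Rightarrow> 'a \<Rightarrow> 'a) \<Rightarrow> 'a set \<Rightarrow> ('a \<Rightarrow> 'c::real_inner) \<Rightarrow> bool" where
  "proper_biharmonic geo proj M f \<longleftrightarrow>
     (\<forall>p\<in>M. bitension geo proj f p = 0) \<and> (\<exists>p\<in>M. tension geo proj f p \<noteq> 0)"

end

theory Submission
  imports Defs
begin

(* Restricted to the unit sphere, a harmonic form F of degree k with |F| = r |x|^k is an eigenmap: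
   its Hessian along great circles traces to -\<lambda> F with \<lambda> = k (k + m - 1), because the
   Euclidean Laplacian of F vanishes and Euler's identity accounts for the radial terms.  Hence
   \<phi> = (F1, F2) has constant |d\<phi>|^2 = \<lambda>1 r1^2 + \<lambda>2 r2^2, tension (\<tau>1 F1, \<tau>2 F2) with
   \<tau>i = |d\<phi>|^2 - \<lambda>i, and, as the tension has the same shape as \<phi>, bitension
   ((\<tau>1^2 + \<sigma>) F1, (\<tau>2^2 + \<sigma>) F2) with \<sigma> = \<tau>1 \<lambda>1 r1^2 + \<tau>2 \<lambda>2 r2^2.
   When r1^2 + r2^2 = 1 these coefficients are r2^2 (\<lambda>1 - \<lambda>2)^2 (r2^2 - r1^2) and
   r1^2 (\<lambda>1 - \<lambda>2)^2 (r1^2 - r2^2), while \<tau> \<noteq> 0 iff \<lambda>1 \<noteq> \<lambda>2; finally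
   e(\<phi>i) = \<lambda>i ri^2 / 2. *)

section \<open>Twice differentiable real functions\<close>

definition has_second_derivative ::
  "('a::real_normed_vector \<Rightarrow> real) \<Rightarrow> ('a \<Rightarrow> 'a \<Rightarrow> real) \<Rightarrow> ('a \<Rightarrow> 'a \<Rightarrow> 'a \<Rightarrow> real) \<Rightarrow> bool" where
  "has_second_derivative f D1 D2 \<longleftrightarrow>
     (\<forall>x. (f has_derivative D1 x) (at x)) \<and> (\<forall>x h. ((\<lambda>y. D1 y h) has_derivative D2 x h) (at x))"

definition twice_differentiable :: "('a::real_normed_vector \<Rightarrow> real) \<Rightarrow> bool" where
  "twice_differentiable f \<longleftrightarrow> (\<exists>D1 D2. has_second_derivative f D1 D2)"

lemma twice_differentiable_const: "twice_differentiable (\<lambda>x. c)"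
  unfolding twice_differentiable_def has_second_derivative_def
  by (intro exI[of _ "\<lambda>x h. 0"] exI[of _ "\<lambda>x h k. 0"]) (auto intro!: derivative_eq_intros)

lemma twice_differentiable_vec_nth: "twice_differentiable (\<lambda>x::real^'n. x $ i)"
  unfolding twice_differentiable_def has_second_derivative_def
  by (intro exI[of _ "\<lambda>x h. h $ i"] exI[of _ "\<lambda>x h k. 0"])
     (auto intro!: derivative_eq_intros bounded_linear_imp_has_derivative)

lemma twice_differentiable_add:
  assumes "twice_differentiable f" and "twice_differentiable g"
  shows "twice_differentiable (\<lambda>x. f x + g x)"
proof -
  obtain D1 D2 E1 E2 where "has_second_derivative f D1 D2" "has_second_derivative g E1 E2"
    using assms unfolding twice_differentiable_def by blast
  then have "has_second_derivative (\<lambda>x. f x + g x) (\<lambda>x h. D1 x h + E1 x h) (\<lambda>x h k. D2 x h k + E2 x h k)"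
    unfolding has_second_derivative_def by (auto intro!: derivative_eq_intros)
  then show ?thesis
    unfolding twice_differentiable_def by blast
qed

lemma twice_differentiable_mult:
  assumes "twice_differentiable f" and "twice_differentiable g"
  shows "twice_differentiable (\<lambda>x. f x * g x)"
proof -
  obtain D1 D2 E1 E2 where "has_second_derivative f D1 D2" "has_second_derivative g E1 E2"
    using assms unfolding twice_differentiable_def by blast
  then have "has_second_derivative (\<lambda>x. f x * g x) (\<lambda>x h. f x * E1 x h + D1 x h * g x)
     (\<lambda>x h k. D1 x k * E1 x h + f x * E2 x h k + (D2 x h k * g x + D1 x h * E1 x k))"
    unfolding has_second_derivative_def by (auto intro!: derivative_eq_intros)
  then show ?thesis
    unfolding twice_differentiable_def by blast
qed

(* No finiteness hypotheses here and below: sums and products over infinite sets are 0 and 1. *)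
lemma twice_differentiable_sum:
  assumes "\<And>a. a \<in> A \<Longrightarrow> twice_differentiable (f a)"
  shows "twice_differentiable (\<lambda>x. \<Sum>a\<in>A. f a x)"
proof (cases "finite A")
  case True
  then show ?thesis
    using assms by (induction A rule: finite_induct) (auto intro: twice_differentiable_const twice_differentiable_add)
qed (simp add: twice_differentiable_const)

lemma twice_differentiable_prod:
  assumes "\<And>a. a \<in> A \<Longrightarrow> twice_differentiable (f a)"
  shows "twice_differentiable (\<lambda>x. \<Prod>a\<in>A. f a x)"
proof (cases "finite A")
  case True
  then show ?thesis
    using assms by (induction A rule: finite_induct) (auto intro: twice_differentiable_const twice_differentiable_mult)
qed (simp add: twice_differentiable_const)

lemma twice_differentiable_power: "twice_differentiable f \<Longrightarrow> twice_differentiable (\<lambda>x. f x ^ n)"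
  by (induction n) (auto intro: twice_differentiable_const twice_differentiable_mult)

lemma hom_poly_twice_differentiable:
  assumes "hom_poly k f"
  shows "twice_differentiable f"
proof -
  obtain c where "\<And>x. f x = (\<Sum>\<alpha>\<in>{\<alpha>. sum \<alpha> UNIV = k}. c \<alpha> * (\<Prod>i\<in>UNIV. (x $ i) ^ (\<alpha> i)))"
    using assms unfolding hom_poly_def by blast
  then have "f = (\<lambda>x. \<Sum>\<alpha>\<in>{\<alpha>. sum \<alpha> UNIV = k}. c \<alpha> * (\<Prod>i\<in>UNIV. (x $ i) ^ (\<alpha> i)))"
    by blast
  then show ?thesis
    by (simp add: twice_differentiable_sum twice_differentiable_mult twice_differentiable_const
        twice_differentiable_prod twice_differentiable_power twice_differentiable_vec_nth)
qed

lemma hom_poly_scaleR: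
  assumes "hom_poly k f"
  shows "f (s *\<^sub>R x) = s ^ k * f x"
proof -
  obtain c where c: "\<And>x. f x = (\<Sum>\<alpha>\<in>{\<alpha>. sum \<alpha> UNIV = k}. c \<alpha> * (\<Prod>i\<in>UNIV. (x $ i) ^ (\<alpha> i)))"
    using assms unfolding hom_poly_def by blast
  have "(\<Prod>i\<in>UNIV. ((s *\<^sub>R x) $ i) ^ (\<alpha> i)) = s ^ k * (\<Prod>i\<in>UNIV. (x $ i) ^ (\<alpha> i))"
    if "sum \<alpha> UNIV = k" for \<alpha>
    using that by (simp add: power_mult_distrib prod.distrib power_sum[symmetric])
  then show ?thesis
    by (simp add: c sum_distrib_left algebra_simps)
qed

(* n is the dimension of the ambient space: k (k + n - 2) is the eigenvalue of S^(n-1). *)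
definition sphere_eigenvalue :: "nat \<Rightarrow> nat \<Rightarrow> real" where
  "sphere_eigenvalue k n = real k * (real k + real n - 2)"

lemma sum_norm_sproj_sq:
  fixes x :: "'a::euclidean_space"
  assumes "x \<bullet> x = 1"
  shows "(\<Sum>b\<in>Basis. (norm (sproj x b))\<^sup>2) = real DIM('a) - 1"
proof -
  have "(norm (sproj x b))\<^sup>2 = 1 - (x \<bullet> b) * (x \<bullet> b)" if "b \<in> Basis" for b
    using assms that unfolding sproj_def power2_norm_eq_inner
    by (simp add: inner_commute algebra_simps)
  then show ?thesis
    using euclidean_inner[of x x] assms by (simp add: sum_subtractf)
qed

lemma has_real_derivative_comp_curve:
  assumes "\<And>y. (g has_derivative Dg y) (at y)" and "(\<gamma> has_vector_derivative v) (at t)"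
  shows "((\<lambda>t. g (\<gamma> t)) has_real_derivative Dg (\<gamma> t) v) (at t)"
proof -
  have "((\<lambda>t. g (\<gamma> t)) has_derivative (\<lambda>s. Dg (\<gamma> t) (s *\<^sub>R v))) (at t)"
    using has_derivative_compose[OF assms(2)[unfolded has_vector_derivative_def] assms(1)] .
  moreover have "(\<lambda>s. Dg (\<gamma> t) (s *\<^sub>R v)) = (*) (Dg (\<gamma> t) v)"
    using linear_scale[OF has_derivative_linear[OF assms(1)]] by (auto simp: mult.commute)
  ultimately show ?thesis
    unfolding has_field_derivative_def by simp
qed

context
  fixes f :: "'a::euclidean_space \<Rightarrow> real" and D1 D2
  assumes f: "has_second_derivative f D1 D2"
begin

lemma linear_D1: "linear (D1 x)"
  using f has_derivative_linear unfolding has_second_derivative_def by blast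

lemma linear_D2: "linear (D2 x h)"
  using f has_derivative_linear unfolding has_second_derivative_def by blast

lemma D1_0 [simp]: "D1 x 0 = 0"
  using linear_D1 linear_0 by blast

lemma D1_basis_expansion: "D1 x h = (\<Sum>b\<in>Basis. (h \<bullet> b) * D1 x b)"
  using Linear_Algebra.linear_componentwise[OF linear_D1, of x h 1] by simp

lemma D2_basis_expansion_right: "D2 x h k = (\<Sum>b\<in>Basis. (k \<bullet> b) * D2 x h b)"
  using Linear_Algebra.linear_componentwise[OF linear_D2, of x h k 1] by simp

lemma D2_basis_expansion: "D2 x h k = (\<Sum>b\<in>Basis. (h \<bullet> b) * D2 x b k)"
proof -
  have "((\<lambda>y. D1 y h) has_derivative D2 x h) (at x)"
    using f unfolding has_second_derivative_def by blast
  moreover have "(\<lambda>y. D1 y h) = (\<lambda>y. \<Sum>b\<in>Basis. (h \<bullet> b) * D1 y b)"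
    using D1_basis_expansion by blast
  moreover have "((\<lambda>y. \<Sum>b\<in>Basis. (h \<bullet> b) * D1 y b) has_derivative
      (\<lambda>k. \<Sum>b\<in>Basis. (h \<bullet> b) * D2 x b k)) (at x)"
    using f unfolding has_second_derivative_def by (intro has_derivative_sum has_derivative_mult_right) auto
  ultimately have "D2 x h = (\<lambda>k. \<Sum>b\<in>Basis. (h \<bullet> b) * D2 x b k)"
    using has_derivative_unique by metis
  then show ?thesis
    by metis
qed

lemma linear_D2_left: "linear (\<lambda>h. D2 x h k)"
  by (subst D2_basis_expansion, rule linearI)
     (auto simp: inner_add_left distrib_right sum.distrib sum_distrib_left mult.assoc)

context
  fixes \<gamma> \<gamma>' \<gamma>'' :: "real \<Rightarrow> 'a"
  assumes \<gamma>': "\<And>t. (\<gamma> has_vector_derivative \<gamma>' t) (at t)"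
    and \<gamma>'': "\<And>t. (\<gamma>' has_vector_derivative \<gamma>'' t) (at t)"
begin

lemma has_real_derivative_along_curve:
  "((\<lambda>t. f (\<gamma> t)) has_real_derivative D1 (\<gamma> t) (\<gamma>' t)) (at t)"
  using has_real_derivative_comp_curve[of f D1, OF _ \<gamma>'] f
  unfolding has_second_derivative_def by blast

lemma has_real_derivative_D1_along_curve:
  "((\<lambda>t. D1 (\<gamma> t) (\<gamma>' t)) has_real_derivative D1 (\<gamma> t) (\<gamma>'' t) + D2 (\<gamma> t) (\<gamma>' t) (\<gamma>' t)) (at t)"
proof -
  have "((\<lambda>t. D1 (\<gamma> t) b) has_real_derivative D2 (\<gamma> t) b (\<gamma>' t)) (at t)" for b
    using has_real_derivative_comp_curve[of "\<lambda>y. D1 y b" "\<lambda>y. D2 y b", OF _ \<gamma>'] f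
    unfolding has_second_derivative_def by blast
  moreover have "((\<lambda>t. \<gamma>' t \<bullet> b) has_real_derivative \<gamma>'' t \<bullet> b) (at t)" for b
    using \<gamma>''[of t] unfolding has_vector_derivative_def has_field_derivative_def
    by (auto intro!: derivative_eq_intros simp: algebra_simps)
  ultimately have "((\<lambda>t. \<Sum>b\<in>Basis. (\<gamma>' t \<bullet> b) * D1 (\<gamma> t) b) has_real_derivative
      (\<Sum>b\<in>Basis. (\<gamma>' t \<bullet> b) * D2 (\<gamma> t) b (\<gamma>' t) + (\<gamma>'' t \<bullet> b) * D1 (\<gamma> t) b)) (at t)"
    by (intro DERIV_sum DERIV_mult')
  then show ?thesis
    by (simp add: sum.distrib add.commute flip: D1_basis_expansion D2_basis_expansion)
qed

end

lemma euler_identities: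
  assumes hom: "\<And>s y. f (s *\<^sub>R y) = s ^ k * f y"
  shows "D1 x x = real k * f x" and "D2 x x x = real k * real (k - 1) * f x"
proof -
  have ray': "((\<lambda>s. s *\<^sub>R x) has_vector_derivative x) (at s)"
    and ray'': "((\<lambda>s. x) has_vector_derivative 0) (at s)" for s
    by (auto intro!: derivative_eq_intros)
  have D1_ray: "D1 (s *\<^sub>R x) x = real k * s ^ (k - 1) * f x" for s
  proof (rule DERIV_unique)
    show "((\<lambda>s. s ^ k * f x) has_real_derivative D1 (s *\<^sub>R x) x) (at s)"
      using has_real_derivative_along_curve[OF ray' ray''] by (simp add: hom)
    show "((\<lambda>s. s ^ k * f x) has_real_derivative real k * s ^ (k - 1) * f x) (at s)"
      by (auto intro!: derivative_eq_intros)
  qed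
  then show "D1 x x = real k * f x"
    using D1_ray[of 1] by simp
  have "D2 x x x = real k * (real (k - 1) * 1 ^ (k - 2)) * f x"
  proof (rule DERIV_unique)
    show "((\<lambda>s. real k * s ^ (k - 1) * f x) has_real_derivative D2 x x x) (at 1)"
      using has_real_derivative_D1_along_curve[OF ray' ray'', of 1] by (simp add: D1_ray)
    show "((\<lambda>s. real k * s ^ (k - 1) * f x) has_real_derivative real k * (real (k - 1) * 1 ^ (k - 2)) * f x) (at 1)"
      by (auto intro!: derivative_eq_intros simp: diff_diff_add)
  qed
  then show "D2 x x x = real k * real (k - 1) * f x"
    by simp
qed

lemma trace_D2_sproj:
  assumes x: "x \<bullet> x = 1"
  shows "(\<Sum>b\<in>Basis. D2 x (sproj x b) (sproj x b)) = (\<Sum>b\<in>Basis. D2 x b b) - D2 x x x"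
proof -
  have diff_left: "D2 x (h - c *\<^sub>R x) k = D2 x h k - c * D2 x x k"
    and diff_right: "D2 x k (h - c *\<^sub>R x) = D2 x k h - c * D2 x k x" for c h k
    using linear_diff[OF linear_D2_left] linear_scale[OF linear_D2_left]
      linear_diff[OF linear_D2] linear_scale[OF linear_D2] by simp_all
  have "D2 x (sproj x b) (sproj x b) =
      D2 x b b - (b \<bullet> x) * D2 x b x - (b \<bullet> x) * D2 x x b + (b \<bullet> x) * (b \<bullet> x) * D2 x x x" for b
    unfolding sproj_def diff_left diff_right by (simp add: algebra_simps)
  moreover have "(\<Sum>b\<in>Basis. (b \<bullet> x) * D2 x b x) = D2 x x x"
    using D2_basis_expansion[of x x x] by (simp add: inner_commute)
  moreover have "(\<Sum>b\<in>Basis. (b \<bullet> x) * D2 x x b) = D2 x x x"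
    using D2_basis_expansion_right[of x x x] by (simp add: inner_commute)
  moreover have "(\<Sum>b\<in>Basis. (b \<bullet> x) * (b \<bullet> x) * D2 x x x) = D2 x x x"
    using euclidean_inner[of x x] x by (simp add: inner_commute flip: sum_distrib_right)
  ultimately show ?thesis
    by (simp add: sum.distrib sum_subtractf)
qed

(* D2 x v v - |v|^2 D1 x x is the Hessian of f restricted to the sphere, in the tangent direction v. *)
lemma sphere_laplacian_harmonic_homogeneous:
  assumes hom: "\<And>s y. f (s *\<^sub>R y) = s ^ k * f y"
    and harmonic: "(\<Sum>b\<in>Basis. D2 x b b) = 0" and x: "x \<bullet> x = 1"
  shows "(\<Sum>b\<in>Basis. D2 x (sproj x b) (sproj x b) - (norm (sproj x b))\<^sup>2 * D1 x x)
       = - sphere_eigenvalue k DIM('a) * f x"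
proof -
  have "(\<Sum>b\<in>Basis. D2 x (sproj x b) (sproj x b)) = - (real k * real (k - 1) * f x)"
    using trace_D2_sproj[OF x] euler_identities(2)[OF hom] harmonic by simp
  moreover have "(\<Sum>b\<in>Basis. (norm (sproj x b))\<^sup>2 * D1 x x) = (real DIM('a) - 1) * (real k * f x)"
    using sum_norm_sproj_sq[OF x] euler_identities(1)[OF hom] by (simp flip: sum_distrib_right)
  ultimately show ?thesis
    by (cases k) (auto simp: sum_subtractf sphere_eigenvalue_def algebra_simps)
qed

end

lemma sum_Basis_vec: "(\<Sum>b\<in>(Basis :: (real^'n) set). g b) = (\<Sum>i\<in>UNIV. g (axis i 1))"
  by (simp add: Basis_vec_def UNION_singleton_eq_range sum.reindex inj_on_def axis_eq_axis)

lemma eucl_laplacian_eq_trace: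
  assumes f: "has_second_derivative f D1 D2"
  shows "eucl_laplacian f x = (\<Sum>b\<in>Basis. D2 x b b)"
proof -
  have "deriv (deriv (\<lambda>t. f (x + t *\<^sub>R b))) 0 = D2 x b b" for b
  proof -
    have line': "((\<lambda>t. x + t *\<^sub>R b) has_vector_derivative b) (at t)"
      and line'': "((\<lambda>t. b) has_vector_derivative 0) (at t)" for t
      by (auto intro!: derivative_eq_intros)
    have "deriv (\<lambda>t. f (x + t *\<^sub>R b)) = (\<lambda>t. D1 (x + t *\<^sub>R b) b)"
      using has_real_derivative_along_curve[OF f line' line''] by (intro ext DERIV_imp_deriv)
    then show ?thesis
      using has_real_derivative_D1_along_curve[OF f line' line'', of 0] D1_0[OF f]
      by (simp add: DERIV_imp_deriv)
  qed
  then show ?thesis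
    unfolding eucl_laplacian_def sum_Basis_vec by simp
qed

section \<open>Great circles\<close>

definition sgeo_vel :: "'a::real_normed_vector \<Rightarrow> 'a \<Rightarrow> real \<Rightarrow> 'a" where
  "sgeo_vel x u t = (- norm u * sin (t * norm u)) *\<^sub>R x + cos (t * norm u) *\<^sub>R u"

definition sgeo_acc :: "'a::real_normed_vector \<Rightarrow> 'a \<Rightarrow> real \<Rightarrow> 'a" where
  "sgeo_acc x u t = - ((norm u)\<^sup>2 * cos (t * norm u)) *\<^sub>R x - (norm u * sin (t * norm u)) *\<^sub>R u"

lemma sgeo_zero_direction [simp]: "sgeo x 0 t = x"
  by (simp add: sgeo_def)

lemma sgeo_at_0 [simp]:
  "sgeo x u 0 = x" "sgeo_vel x u 0 = u" "sgeo_acc x u 0 = - ((norm u)\<^sup>2 *\<^sub>R x)"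
  by (simp_all add: sgeo_def sgeo_vel_def sgeo_acc_def)

lemma has_vector_derivative_sgeo: "(sgeo x u has_vector_derivative sgeo_vel x u t) (at t)"
proof (cases "u = 0")
  case True
  then show ?thesis
    by (simp add: sgeo_def[abs_def] sgeo_vel_def)
next
  case False
  then show ?thesis
    unfolding sgeo_def[abs_def] sgeo_vel_def
    by (auto intro!: derivative_eq_intros simp: algebra_simps)
qed

lemma has_vector_derivative_sgeo_vel: "(sgeo_vel x u has_vector_derivative sgeo_acc x u t) (at t)"
  unfolding sgeo_vel_def[abs_def] sgeo_acc_def
  by (auto intro!: derivative_eq_intros simp: power2_eq_square algebra_simps)

lemma sgeo_on_sphere:
  fixes x u :: "'a::real_inner"
  assumes "x \<bullet> x = 1" and "x \<bullet> u = 0"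
  shows "sgeo x u t \<bullet> sgeo x u t = 1"
proof (cases "u = 0")
  case False
  have "sgeo x u t \<bullet> sgeo x u t = (cos (t * norm u))\<^sup>2 * (x \<bullet> x)
      + (sin (t * norm u) / norm u)\<^sup>2 * (u \<bullet> u) + 2 * cos (t * norm u) * (sin (t * norm u) / norm u) * (x \<bullet> u)"
    unfolding sgeo_def by (simp add: inner_commute power2_eq_square algebra_simps)
  also have "\<dots> = (cos (t * norm u))\<^sup>2 + (sin (t * norm u))\<^sup>2"
    using assms False by (simp add: power_divide flip: power2_norm_eq_inner)
  finally show ?thesis
    by simp
qed (simp add: sgeo_def assms)

lemma inner_sproj: "x \<bullet> x = 1 \<Longrightarrow> x \<bullet> sproj x b = 0"
  by (simp add: sproj_def inner_diff_right inner_commute)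

lemma has_real_derivative_inner:
  assumes "(f has_vector_derivative f') (at t)" and "(g has_vector_derivative g') (at t)"
  shows "((\<lambda>t. f t \<bullet> g t) has_real_derivative f t \<bullet> g' + f' \<bullet> g t) (at t)"
  unfolding has_field_derivative_def
  by (rule has_derivative_eq_rhs[OF has_derivative_inner[OF assms[unfolded has_vector_derivative_def]]])
     (auto simp: algebra_simps)

section \<open>Eigenmaps of the unit sphere\<close>

(* G x u and H x u are the velocity and acceleration of F along the great circle sgeo x u;
   the last assumption says that the restriction of F to the sphere satisfies \<Delta> F = l F. *)
locale sphere_eigenmap =
  fixes F :: "'a::euclidean_space \<Rightarrow> 'c::real_inner"
    and G H :: "'a \<Rightarrow> 'a \<Rightarrow> real \<Rightarrow> 'c"
    and l r :: real
  assumes velocity: "((\<lambda>t. F (sgeo x u t)) has_vector_derivative G x u t) (at t)"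
    and acceleration: "(G x u has_vector_derivative H x u t) (at t)"
    and inner_self_on_sphere: "x \<bullet> x = 1 \<Longrightarrow> F x \<bullet> F x = r\<^sup>2"
    and trace_acceleration: "x \<bullet> x = 1 \<Longrightarrow> (\<Sum>b\<in>Basis. H x (sproj x b) 0) = - l *\<^sub>R F x"
begin

lemma velocity_orthogonal:
  assumes "x \<bullet> x = 1" and "x \<bullet> u = 0"
  shows "F (sgeo x u t) \<bullet> G x u t = 0"
proof -
  have "((\<lambda>t. F (sgeo x u t) \<bullet> F (sgeo x u t)) has_real_derivative 0) (at t)"
    using inner_self_on_sphere[OF sgeo_on_sphere[OF assms]] by simp
  then have "F (sgeo x u t) \<bullet> G x u t + G x u t \<bullet> F (sgeo x u t) = 0"
    using DERIV_unique[OF has_real_derivative_inner[OF velocity velocity]] by blast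
  then show ?thesis
    by (simp add: inner_commute)
qed

lemma acceleration_normal:
  assumes "x \<bullet> x = 1" and "x \<bullet> u = 0"
  shows "F x \<bullet> H x u 0 = - (G x u 0 \<bullet> G x u 0)"
proof -
  have "((\<lambda>t. F (sgeo x u t) \<bullet> G x u t) has_real_derivative 0) (at 0)"
    using velocity_orthogonal[OF assms] by simp
  then have "F (sgeo x u 0) \<bullet> H x u 0 + G x u 0 \<bullet> G x u 0 = 0"
    using DERIV_unique[OF has_real_derivative_inner[OF velocity acceleration]] by blast
  then show ?thesis
    by simp
qed

lemma trace_velocity_sq:
  assumes x: "x \<bullet> x = 1"
  shows "(\<Sum>b\<in>Basis. G x (sproj x b) 0 \<bullet> G x (sproj x b) 0) = l * r\<^sup>2"
proof -
  have "(\<Sum>b\<in>Basis. G x (sproj x b) 0 \<bullet> G x (sproj x b) 0) = - (F x \<bullet> (\<Sum>b\<in>Basis. H x (sproj x b) 0))"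
    using acceleration_normal[OF x inner_sproj[OF x]] by (simp add: inner_sum_right sum_negf)
  then show ?thesis
    using trace_acceleration[OF x] inner_self_on_sphere[OF x] by simp
qed

lemma dmap_sgeo: "dmap sgeo F x u = G x u 0"
  unfolding dmap_def by (rule vector_derivative_at[OF velocity])

lemma energy_density_on_sphere:
  assumes "x \<bullet> x = 1"
  shows "energy_density sgeo sproj F x = l * r\<^sup>2 / 2"
  using trace_velocity_sq[OF assms] by (simp add: energy_density_def dmap_sgeo power2_norm_eq_inner)

end

section \<open>Harmonic forms restricted to the sphere\<close>

lemma has_vector_derivative_vec:
  fixes f :: "real \<Rightarrow> real^'n"
  assumes "\<And>j. ((\<lambda>t. f t $ j) has_real_derivative f' $ j) (at t)"
  shows "(f has_vector_derivative f') (at t)"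
  unfolding has_vector_derivative_def
proof (subst has_derivative_componentwise_within, intro ballI)
  fix b :: "real^'n"
  assume "b \<in> Basis"
  then obtain j where b: "b = axis j 1"
    by (auto simp: Basis_vec_def)
  show "((\<lambda>t. f t \<bullet> b) has_derivative (\<lambda>h. (h *\<^sub>R f') \<bullet> b)) (at t within UNIV)"
    using assms[of j] by (simp add: b inner_axis has_field_derivative_def mult_commute_abs)
qed

lemma harmonic_form_sphere_eigenmap:
  fixes F :: "real^'m \<Rightarrow> real^'n"
  assumes harmonic: "harmonic_form k F" and norm_F: "\<forall>x. (norm (F x))\<^sup>2 = r\<^sup>2 * norm x ^ (2 * k)"
  shows "\<exists>G H. sphere_eigenmap F G H (sphere_eigenvalue k CARD('m)) r"
proof -
  have hom: "hom_poly k (\<lambda>x. F x $ j)" and lap: "eucl_laplacian (\<lambda>x. F x $ j) x = 0" for j x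
    using harmonic unfolding harmonic_form_def by auto
  obtain D1 D2 where D: "\<And>j. has_second_derivative (\<lambda>x. F x $ j) (D1 j) (D2 j)"
    using hom_poly_twice_differentiable[OF hom] unfolding twice_differentiable_def by metis
  note along = has_real_derivative_along_curve[OF D has_vector_derivative_sgeo has_vector_derivative_sgeo_vel]
    and along' = has_real_derivative_D1_along_curve[OF D has_vector_derivative_sgeo has_vector_derivative_sgeo_vel]
  define G where "G x u t = (\<chi> j. D1 j (sgeo x u t) (sgeo_vel x u t))" for x u t
  define H where "H x u t = (\<chi> j. D1 j (sgeo x u t) (sgeo_acc x u t)
      + D2 j (sgeo x u t) (sgeo_vel x u t) (sgeo_vel x u t))" for x u t
  have "sphere_eigenmap F G H (sphere_eigenvalue k CARD('m)) r"
  proof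
    show "((\<lambda>t. F (sgeo x u t)) has_vector_derivative G x u t) (at t)" for x u t
      unfolding G_def by (rule has_vector_derivative_vec) (simp add: along)
    show "(G x u has_vector_derivative H x u t) (at t)" for x u t
      unfolding G_def[abs_def] H_def by (rule has_vector_derivative_vec) (simp add: along')
    show "F x \<bullet> F x = r\<^sup>2" if "x \<bullet> x = 1" for x
      using that norm_F[rule_format, of x] by (simp add: power2_norm_eq_inner flip: norm_eq_1)
    show "(\<Sum>b\<in>Basis. H x (sproj x b) 0) = - sphere_eigenvalue k CARD('m) *\<^sub>R F x" if x: "x \<bullet> x = 1" for x
    proof -
      have D1_radial: "D1 j x (- ((norm u)\<^sup>2 *\<^sub>R x)) = - (norm u)\<^sup>2 * D1 j x x" for j and u :: "real^'m"
        using linear_D1[OF D] by (simp add: linear_neg linear_scale)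
      have "(\<Sum>b\<in>Basis. H x (sproj x b) 0) $ j = - sphere_eigenvalue k CARD('m) * F x $ j" for j
        using sphere_laplacian_harmonic_homogeneous[OF D hom_poly_scaleR[OF hom] _ x, of j]
          lap eucl_laplacian_eq_trace[OF D]
        by (simp add: H_def D1_radial)
      then show ?thesis
        by (simp add: vec_eq_iff)
    qed
  qed
  then show ?thesis
    by blast
qed

section \<open>Products of eigenmaps\<close>

lemma exists_unit_vector: "\<exists>x::'a::euclidean_space. x \<bullet> x = 1"
proof -
  obtain b :: 'a where "b \<in> Basis"
    using nonempty_Basis by blast
  then have "b \<bullet> b = 1"
    by (simp add: inner_Basis)
  then show ?thesis ..
qed

lemma dmap_eqI:
  assumes "((\<lambda>t. f (geo p w t)) has_vector_derivative v) (at 0)"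
  shows "dmap geo f p w = v"
  unfolding dmap_def by (rule vector_derivative_at[OF assms])

lemma ddmap_eqI:
  assumes "\<And>t. ((\<lambda>t. f (geo p w t)) has_vector_derivative V t) (at t)"
    and "(V has_vector_derivative a) (at 0)"
  shows "ddmap geo f p w = a"
proof -
  have "(\<lambda>t. vector_derivative (\<lambda>s. f (geo p w s)) (at t)) = V"
    using vector_derivative_at[OF assms(1)] by blast
  then show ?thesis
    unfolding ddmap_def using vector_derivative_at[OF assms(2)] by simp
qed

lemma cov2_eqI:
  assumes "\<And>t. ((\<lambda>t. W (geo p w t)) has_vector_derivative V t) (at t)"
    and "\<And>t. V t \<bullet> f (geo p w t) = 0"
    and "(V has_vector_derivative a) (at 0)"
  shows "cov2 geo f W p w = ttan (f p) a"
proof -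
  have "(\<lambda>t. ttan (f (geo p w t)) (vector_derivative (\<lambda>s. W (geo p w s)) (at t))) = V"
    using vector_derivative_at[OF assms(1)] assms(2) by (simp add: ttan_def)
  then show ?thesis
    unfolding cov2_def using vector_derivative_at[OF assms(3)] by simp
qed

lemma sphere_curv_orthogonal: "X \<bullet> Y = 0 \<Longrightarrow> sphere_curv X Y X = - (X \<bullet> X) *\<^sub>R Y"
  by (simp add: sphere_curv_def inner_commute)

lemma ttan_sum: "ttan q (\<Sum>i\<in>S. f i) = (\<Sum>i\<in>S. ttan q (f i))"
  by (simp add: ttan_def inner_sum_left scaleR_sum_left sum_subtractf)

lemma sproj_0 [simp]: "sproj x 0 = 0"
  by (simp add: sproj_def)

lemma sum_Basis_prod:
  fixes g :: "'a::euclidean_space \<times> 'b::euclidean_space \<Rightarrow> 'c::comm_monoid_add"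
  shows "(\<Sum>b\<in>Basis. g b) = (\<Sum>b\<in>Basis. g (b, 0)) + (\<Sum>b\<in>Basis. g (0, b))"
proof -
  have "inj_on (\<lambda>u. (u::'a, 0::'b)) Basis" "inj_on (\<lambda>u. (0::'a, u::'b)) Basis"
    by (auto intro!: inj_onI)
  then show ?thesis
    unfolding Basis_prod_def by (subst sum.union_disjoint) (auto simp: sum.reindex)
qed

lemma sum_Pair_0: "(\<Sum>b\<in>S. (f b, 0)) = (\<Sum>b\<in>S. f b, 0)" "(\<Sum>b\<in>S. (0, f b)) = (0, \<Sum>b\<in>S. f b)"
  by (simp_all add: prod_eq_iff fst_sum snd_sum)

locale sphere_eigenmap_pair =
  M1: sphere_eigenmap F1 G1 H1 l1 r1 + M2: sphere_eigenmap F2 G2 H2 l2 r2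
  for F1 :: "'a::euclidean_space \<Rightarrow> 'c::real_inner" and G1 H1 l1 r1
    and F2 :: "'b::euclidean_space \<Rightarrow> 'd::real_inner" and G2 H2 l2 r2
begin

lemma has_vector_derivative_left:
  "((\<lambda>t. map_prod F1 F2 (pgeo (x, y) (u, 0) t)) has_vector_derivative (G1 x u t, 0)) (at t)"
  by (simp add: pgeo_def has_vector_derivative_Pair M1.velocity)

lemma has_vector_derivative_right:
  "((\<lambda>t. map_prod F1 F2 (pgeo (x, y) (0, v) t)) has_vector_derivative (0, G2 y v t)) (at t)"
  by (simp add: pgeo_def has_vector_derivative_Pair M2.velocity)

lemma dmap_left: "dmap pgeo (map_prod F1 F2) (x, y) (u, 0) = (G1 x u 0, 0)"
  by (rule dmap_eqI, rule has_vector_derivative_left)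

lemma dmap_right: "dmap pgeo (map_prod F1 F2) (x, y) (0, v) = (0, G2 y v 0)"
  by (rule dmap_eqI, rule has_vector_derivative_right)

lemma ddmap_left: "ddmap pgeo (map_prod F1 F2) (x, y) (u, 0) = (H1 x u 0, 0)"
  by (rule ddmap_eqI, rule has_vector_derivative_left)
     (simp add: has_vector_derivative_Pair M1.acceleration)

lemma ddmap_right: "ddmap pgeo (map_prod F1 F2) (x, y) (0, v) = (0, H2 y v 0)"
  by (rule ddmap_eqI, rule has_vector_derivative_right)
     (simp add: has_vector_derivative_Pair M2.acceleration)

lemma cov2_left:
  assumes x: "x \<bullet> x = 1" and y: "y \<bullet> y = 1" and u: "x \<bullet> u = 0"
    and V: "\<And>p q. p \<bullet> p = 1 \<Longrightarrow> q \<bullet> q = 1 \<Longrightarrow> V (p, q) = (c1 *\<^sub>R F1 p, c2 *\<^sub>R F2 q)"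
  shows "cov2 pgeo (map_prod F1 F2) V (x, y) (u, 0) = ttan (F1 x, F2 y) (c1 *\<^sub>R H1 x u 0, 0)"
proof -
  have "(\<lambda>t. V (pgeo (x, y) (u, 0) t)) = (\<lambda>t. (c1 *\<^sub>R F1 (sgeo x u t), c2 *\<^sub>R F2 y))"
    using V sgeo_on_sphere[OF x u] y by (simp add: pgeo_def)
  then have "((\<lambda>t. V (pgeo (x, y) (u, 0) t)) has_vector_derivative (c1 *\<^sub>R G1 x u t, 0)) (at t)" for t
    using bounded_linear.has_vector_derivative[OF bounded_linear_scaleR_right M1.velocity]
    by (simp add: has_vector_derivative_Pair)
  moreover have "(c1 *\<^sub>R G1 x u t, 0) \<bullet> map_prod F1 F2 (pgeo (x, y) (u, 0) t) = 0" for t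
    using M1.velocity_orthogonal[OF x u] by (simp add: pgeo_def inner_commute)
  moreover have "((\<lambda>t. (c1 *\<^sub>R G1 x u t, 0)) has_vector_derivative (c1 *\<^sub>R H1 x u 0, 0)) (at 0)"
    using bounded_linear.has_vector_derivative[OF bounded_linear_scaleR_right M1.acceleration]
    by (simp add: has_vector_derivative_Pair)
  ultimately have "cov2 pgeo (map_prod F1 F2) V (x, y) (u, 0) = ttan (map_prod F1 F2 (x, y)) (c1 *\<^sub>R H1 x u 0, 0)"
    by (rule cov2_eqI)
  then show ?thesis
    by simp
qed

lemma cov2_right:
  assumes x: "x \<bullet> x = 1" and y: "y \<bullet> y = 1" and v: "y \<bullet> v = 0"
    and V: "\<And>p q. p \<bullet> p = 1 \<Longrightarrow> q \<bullet> q = 1 \<Longrightarrow> V (p, q) = (c1 *\<^sub>R F1 p, c2 *\<^sub>R F2 q)"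
  shows "cov2 pgeo (map_prod F1 F2) V (x, y) (0, v) = ttan (F1 x, F2 y) (0, c2 *\<^sub>R H2 y v 0)"
proof -
  have "(\<lambda>t. V (pgeo (x, y) (0, v) t)) = (\<lambda>t. (c1 *\<^sub>R F1 x, c2 *\<^sub>R F2 (sgeo y v t)))"
    using V sgeo_on_sphere[OF y v] x by (simp add: pgeo_def)
  then have "((\<lambda>t. V (pgeo (x, y) (0, v) t)) has_vector_derivative (0, c2 *\<^sub>R G2 y v t)) (at t)" for t
    using bounded_linear.has_vector_derivative[OF bounded_linear_scaleR_right M2.velocity]
    by (simp add: has_vector_derivative_Pair)
  moreover have "(0, c2 *\<^sub>R G2 y v t) \<bullet> map_prod F1 F2 (pgeo (x, y) (0, v) t) = 0" for t
    using M2.velocity_orthogonal[OF y v] by (simp add: pgeo_def inner_commute)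
  moreover have "((\<lambda>t. (0, c2 *\<^sub>R G2 y v t)) has_vector_derivative (0, c2 *\<^sub>R H2 y v 0)) (at 0)"
    using bounded_linear.has_vector_derivative[OF bounded_linear_scaleR_right M2.acceleration]
    by (simp add: has_vector_derivative_Pair)
  ultimately have "cov2 pgeo (map_prod F1 F2) V (x, y) (0, v) = ttan (map_prod F1 F2 (x, y)) (0, c2 *\<^sub>R H2 y v 0)"
    by (rule cov2_eqI)
  then show ?thesis
    by simp
qed

definition norm_dphi_sq :: real where
  "norm_dphi_sq = l1 * r1\<^sup>2 + l2 * r2\<^sup>2"

definition tau1 :: real where
  "tau1 = norm_dphi_sq - l1"

definition tau2 :: real where
  "tau2 = norm_dphi_sq - l2"

lemma tension_product:
  assumes x: "x \<bullet> x = 1" and y: "y \<bullet> y = 1"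
  shows "tension pgeo pproj (map_prod F1 F2) (x, y) = (tau1 *\<^sub>R F1 x, tau2 *\<^sub>R F2 y)"
proof -
  have "(\<Sum>b\<in>Basis. ddmap pgeo (map_prod F1 F2) (x, y) (pproj (x, y) b)) = (- l1 *\<^sub>R F1 x, - l2 *\<^sub>R F2 y)"
    using M1.trace_acceleration[OF x] M2.trace_acceleration[OF y]
    by (simp add: sum_Basis_prod pproj_def ddmap_left ddmap_right sum_Pair_0)
  then show ?thesis
    using M1.inner_self_on_sphere[OF x] M2.inner_self_on_sphere[OF y]
    by (simp add: tension_def ttan_def tau1_def tau2_def norm_dphi_sq_def algebra_simps)
qed

definition sigma :: real where
  "sigma = tau1 * l1 * r1\<^sup>2 + tau2 * l2 * r2\<^sup>2"

lemma bitension_product: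
  assumes x: "x \<bullet> x = 1" and y: "y \<bullet> y = 1"
  shows "bitension pgeo pproj (map_prod F1 F2) (x, y) = ((tau1\<^sup>2 + sigma) *\<^sub>R F1 x, (tau2\<^sup>2 + sigma) *\<^sub>R F2 y)"
proof -
  let ?\<phi> = "map_prod F1 F2" and ?q = "(F1 x, F2 y)"
  have \<tau>: "tension pgeo pproj ?\<phi> (p, q) = (tau1 *\<^sub>R F1 p, tau2 *\<^sub>R F2 q)" if "p \<bullet> p = 1" "q \<bullet> q = 1" for p q
    using tension_product[OF that] .
  have rough: "rough_laplacian pgeo pproj ?\<phi> (tension pgeo pproj ?\<phi>) (x, y)
      = - ttan ?q (- (tau1 * l1) *\<^sub>R F1 x, - (tau2 * l2) *\<^sub>R F2 y)"
    using M1.trace_acceleration[OF x] M2.trace_acceleration[OF y]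
    by (simp add: rough_laplacian_def sum_Basis_prod pproj_def cov2_left[OF x y inner_sproj[OF x] \<tau>]
        cov2_right[OF x y inner_sproj[OF y] \<tau>] sum_Pair_0 flip: ttan_sum scaleR_sum_right)
       (simp add: ttan_def algebra_simps)
  have curv: "(\<Sum>b\<in>Basis. sphere_curv (dmap pgeo ?\<phi> (x, y) (pproj (x, y) b)) (tension pgeo pproj ?\<phi> (x, y))
      (dmap pgeo ?\<phi> (x, y) (pproj (x, y) b))) = - norm_dphi_sq *\<^sub>R (tau1 *\<^sub>R F1 x, tau2 *\<^sub>R F2 y)"
  proof -
    let ?\<tau> = "(tau1 *\<^sub>R F1 x, tau2 *\<^sub>R F2 y)"
    have "sphere_curv (G1 x (sproj x b) 0, 0) ?\<tau> (G1 x (sproj x b) 0, 0)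
        = - (G1 x (sproj x b) 0 \<bullet> G1 x (sproj x b) 0) *\<^sub>R ?\<tau>" for b
      using sphere_curv_orthogonal[of "(G1 x (sproj x b) 0, 0)" ?\<tau>]
        M1.velocity_orthogonal[OF x inner_sproj[OF x], of b 0]
      by (simp add: inner_commute del: scaleR_Pair)
    moreover have "sphere_curv (0, G2 y (sproj y b) 0) ?\<tau> (0, G2 y (sproj y b) 0)
        = - (G2 y (sproj y b) 0 \<bullet> G2 y (sproj y b) 0) *\<^sub>R ?\<tau>" for b
      using sphere_curv_orthogonal[of "(0, G2 y (sproj y b) 0)" ?\<tau>]
        M2.velocity_orthogonal[OF y inner_sproj[OF y], of b 0]
      by (simp add: inner_commute del: scaleR_Pair)
    ultimately show ?thesis
      using M1.trace_velocity_sq[OF x] M2.trace_velocity_sq[OF y]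
      by (simp add: sum_Basis_prod pproj_def dmap_left dmap_right tension_product[OF x y]
          norm_dphi_sq_def scaleR_diff_left sum_negf flip: scaleR_sum_left del: scaleR_Pair)
  qed
  have "ttan ?q (- (tau1 * l1) *\<^sub>R F1 x, - (tau2 * l2) *\<^sub>R F2 y)
      = ((sigma - tau1 * l1) *\<^sub>R F1 x, (sigma - tau2 * l2) *\<^sub>R F2 y)"
    using M1.inner_self_on_sphere[OF x] M2.inner_self_on_sphere[OF y]
    by (simp add: ttan_def sigma_def algebra_simps)
  then have "bitension pgeo pproj ?\<phi> (x, y)
      = ((sigma - tau1 * l1 + norm_dphi_sq * tau1) *\<^sub>R F1 x, (sigma - tau2 * l2 + norm_dphi_sq * tau2) *\<^sub>R F2 y)"
    by (simp add: bitension_def rough curv scaleR_add_left)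
  then show ?thesis
    by (simp add: tau1_def tau2_def power2_eq_square algebra_simps)
qed

lemma pair_scaleR_eq_0_iff:
  assumes "x \<bullet> x = 1" and "y \<bullet> y = 1" and "r1 \<noteq> 0" and "r2 \<noteq> 0"
  shows "(c1 *\<^sub>R F1 x, c2 *\<^sub>R F2 y) = 0 \<longleftrightarrow> c1 = 0 \<and> c2 = 0"
  using M1.inner_self_on_sphere[OF assms(1)] M2.inner_self_on_sphere[OF assms(2)] assms(3,4)
  by (auto simp: zero_prod_def)

lemma proper_biharmonic_product_iff:
  assumes "r1 \<noteq> 0" and "r2 \<noteq> 0"
  shows "proper_biharmonic pgeo pproj (sphere 0 1 \<times> sphere 0 1) (map_prod F1 F2) \<longleftrightarrow>
    tau1\<^sup>2 + sigma = 0 \<and> tau2\<^sup>2 + sigma = 0 \<and> (tau1 \<noteq> 0 \<or> tau2 \<noteq> 0)"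
proof -
  obtain x0 :: 'a and y0 :: 'b where "x0 \<bullet> x0 = 1" "y0 \<bullet> y0 = 1"
    using exists_unit_vector by metis
  then show ?thesis
    using pair_scaleR_eq_0_iff[OF _ _ assms]
    by (auto simp: proper_biharmonic_def norm_eq_1 tension_product bitension_product)
qed

lemma proper_biharmonic_product_iff_radii:
  assumes "r1 > 0" and "r2 > 0" and radii: "r1\<^sup>2 + r2\<^sup>2 = 1"
  shows "proper_biharmonic pgeo pproj (sphere 0 1 \<times> sphere 0 1) (map_prod F1 F2) \<longleftrightarrow>
    r1\<^sup>2 = r2\<^sup>2 \<and> l1 \<noteq> l2"
proof -
  have "tau1 = l1 * r1\<^sup>2 + l2 * r2\<^sup>2 - l1 * (r1\<^sup>2 + r2\<^sup>2)"
    and "tau2 = l1 * r1\<^sup>2 + l2 * r2\<^sup>2 - l2 * (r1\<^sup>2 + r2\<^sup>2)"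
    by (simp_all add: radii tau1_def tau2_def norm_dphi_sq_def)
  then have tau1: "tau1 = r2\<^sup>2 * (l2 - l1)" and tau2: "tau2 = r1\<^sup>2 * (l1 - l2)"
    by (simp_all add: algebra_simps)
  have bitau1: "tau1\<^sup>2 + sigma = r2\<^sup>2 * (l1 - l2)\<^sup>2 * (r2\<^sup>2 - r1\<^sup>2)"
    and bitau2: "tau2\<^sup>2 + sigma = r1\<^sup>2 * (l1 - l2)\<^sup>2 * (r1\<^sup>2 - r2\<^sup>2)"
    unfolding sigma_def tau1 tau2 by (simp_all add: power2_eq_square algebra_simps)
  have "r1 \<noteq> 0" and "r2 \<noteq> 0"
    using assms(1,2) by simp_all
  then show ?thesis
    unfolding proper_biharmonic_product_iff[OF \<open>r1 \<noteq> 0\<close> \<open>r2 \<noteq> 0\<close>] bitau1 bitau2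
    unfolding tau1 tau2 by auto
qed

theorem proper_biharmonic_product_iff_energy:
  assumes "r1 > 0" and "r2 > 0" and "r1\<^sup>2 + r2\<^sup>2 = 1"
  shows "proper_biharmonic pgeo pproj (sphere 0 1 \<times> sphere 0 1) (map_prod F1 F2) \<longleftrightarrow>
    r1 = 1 / sqrt 2 \<and> r2 = 1 / sqrt 2 \<and>
    (\<forall>x\<in>sphere 0 1. \<forall>y\<in>sphere 0 1. energy_density sgeo sproj F1 x \<noteq> energy_density sgeo sproj F2 y)"
proof -
  obtain x0 :: 'a and y0 :: 'b where "x0 \<bullet> x0 = 1" "y0 \<bullet> y0 = 1"
    using exists_unit_vector by metis
  then have energy: "(\<forall>x\<in>sphere (0::'a) 1. \<forall>y\<in>sphere (0::'b) 1.
      energy_density sgeo sproj F1 x \<noteq> energy_density sgeo sproj F2 y) \<longleftrightarrow> l1 * r1\<^sup>2 \<noteq> l2 * r2\<^sup>2"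
    using M1.energy_density_on_sphere M2.energy_density_on_sphere by (force simp: norm_eq_1)
  have "r = 1 / sqrt 2 \<longleftrightarrow> r\<^sup>2 = 1 / 2" if "r > 0" for r :: real
    using that real_sqrt_unique[of r "1 / 2"] by (auto simp: power_divide real_sqrt_divide)
  then have radii: "r1 = 1 / sqrt 2 \<and> r2 = 1 / sqrt 2 \<longleftrightarrow> r1\<^sup>2 = r2\<^sup>2"
    using assms by auto
  show ?thesis
    unfolding proper_biharmonic_product_iff_radii[OF assms] energy conj_assoc[symmetric] radii
    using assms(1) by auto
qed

end

theorem mainTheorem12:
  fixes F1 :: "real^'m1 \<Rightarrow> real^'n1" and F2 :: "real^'m2 \<Rightarrow> real^'n2"
    and k1 k2 :: nat and r1 r2 :: real
  assumes "CARD('m1) \<ge> 2" and "CARD('m2) \<ge> 2"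
    and "r1 > 0" and "r2 > 0" and "r1\<^sup>2 + r2\<^sup>2 = 1"
    and "harmonic_form k1 F1" and "harmonic_form k2 F2"
    and "\<forall>x. (norm (F1 x))\<^sup>2 = r1\<^sup>2 * (norm x) ^ (2 * k1)"
    and "\<forall>y. (norm (F2 y))\<^sup>2 = r2\<^sup>2 * (norm y) ^ (2 * k2)"
  shows "proper_biharmonic pgeo pproj (sphere (0::real^'m1) 1 \<times> sphere (0::real^'m2) 1)
           (\<lambda>p. (F1 (fst p), F2 (snd p)))
         \<longleftrightarrow> (r1 = 1 / sqrt 2 \<and> r2 = 1 / sqrt 2 \<and>
              (\<forall>x\<in>sphere (0::real^'m1) 1. \<forall>y\<in>sphere (0::real^'m2) 1.
                 energy_density sgeo sproj F1 x \<noteq> energy_density sgeo sproj F2 y))"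
proof -
  obtain G1 H1 where "sphere_eigenmap F1 G1 H1 (sphere_eigenvalue k1 CARD('m1)) r1"
    using harmonic_form_sphere_eigenmap[OF assms(6,8)] by blast
  moreover obtain G2 H2 where "sphere_eigenmap F2 G2 H2 (sphere_eigenvalue k2 CARD('m2)) r2"
    using harmonic_form_sphere_eigenmap[OF assms(7,9)] by blast
  ultimately interpret sphere_eigenmap_pair F1 G1 H1 "sphere_eigenvalue k1 CARD('m1)" r1
      F2 G2 H2 "sphere_eigenvalue k2 CARD('m2)" r2
    by (rule sphere_eigenmap_pair.intro)
  have "(\<lambda>p. (F1 (fst p), F2 (snd p))) = map_prod F1 F2"
    by (simp add: map_prod_def case_prod_beta')
  then show ?thesis
    using proper_biharmonic_product_iff_energy[OF assms(3-5)] by simp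
qed

end
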